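(* Let $\dot x=f(x)+\sum_{i=1}^m g_i(x)u_i$ with $m\ge2$, and let $h:\mathbb{R}^n\to\mathbb{R}$ have relative degree $r<n$ at $x$, with $\xi=[h,L_fh,\dots,L_f^{r-1}h]^\top$. If $g_1(x),\dots,g_m(x)$ are linearly independent, then there is no map $\eta:\mathbb{R}^n\to\mathbb{R}^{n-r}$, differentiable at $x$, that satisfies both of the following: (1) the Jacobian $\begin{bmatrix} d\xi\\ d\eta\end{bmatrix}\in\mathbb{R}^{n\times n}$ is nonsingular at $x$; and (2) there is an open set around $x$ on which $L_{g_i}\eta_j=0$ for all $i=1,\dots,m$ and $j=1,\dots,n-r$.
   Context: $L_f$, $L_{g_i}$ denote Lie derivatives along vector fields. $h$ has relative degree $r$ at $x$ if for all $i=1,\dots,m$ and $k=0,\dots,r-2$, $L_{g_i}L_f^k h\equiv0$ on an open set around $x$, and the row vector $[L_{g_1}L_f^{r-1}h(x),\dots,L_{g_m}L_f^{r-1}h(x)]$ has a nonzero entry. *)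

theory Defs
  imports "HOL-Analysis.Analysis"
begin

definition lie :: "(real^'n \<Rightarrow> real^'n) \<Rightarrow> (real^'n \<Rightarrow> real) \<Rightarrow> real^'n \<Rightarrow> real" where
  "lie v phi = (\<lambda>y. frechet_derivative phi (at y) (v y))"

definition dirder :: "real^'n \<Rightarrow> (real^'n \<Rightarrow> real) \<Rightarrow> real^'n \<Rightarrow> real" where
  "dirder w phi = (\<lambda>y. frechet_derivative phi (at y) w)"

definition smooth_fun :: "(real^'n \<Rightarrow> real) \<Rightarrow> bool" where
  "smooth_fun phi \<longleftrightarrow> (\<forall>ws. \<forall>y. foldr dirder ws phi differentiable (at y))"

definition smooth_field :: "(real^'n \<Rightarrow> real^'n) \<Rightarrow> bool" where
  "smooth_field v \<longleftrightarrow> (\<forall>i. smooth_fun (\<lambda>y. v y $ i))"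

definition rel_degree ::
  "(real^'n \<Rightarrow> real^'n) \<Rightarrow> (nat \<Rightarrow> real^'n \<Rightarrow> real^'n) \<Rightarrow> nat \<Rightarrow> (real^'n \<Rightarrow> real) \<Rightarrow> nat \<Rightarrow> real^'n \<Rightarrow> bool" where
  "rel_degree f g m h r x \<longleftrightarrow> 1 \<le> r \<and>
     (\<exists>U. open U \<and> x \<in> U \<and>
        (\<forall>y\<in>U. \<forall>i<m. \<forall>k. k + 2 \<le> r \<longrightarrow> lie (g i) ((lie f ^^ k) h) y = 0)) \<and>
     (\<exists>i<m. lie (g i) ((lie f ^^ (r - 1)) h) x \<noteq> 0)"

text \<open>A fixed enumeration of the coordinate index type by 0, ..., n-1 (used only to order the
  rows of the Jacobian; nonsingularity does not depend on the choice).\<close>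
definition row_idx :: "'n::finite \<Rightarrow> nat" where
  "row_idx = (SOME e. bij_betw e (UNIV :: 'n set) {..<CARD('n)})"

definition stack :: "(real^'n \<Rightarrow> real^'n) \<Rightarrow> (real^'n \<Rightarrow> real) \<Rightarrow> nat \<Rightarrow> (nat \<Rightarrow> real^'n \<Rightarrow> real) \<Rightarrow> nat \<Rightarrow> real^'n \<Rightarrow> real" where
  "stack f h r eta k = (if k < r then (lie f ^^ k) h else eta (k - r))"

definition jacobian_stack :: "(real^'n::finite \<Rightarrow> real^'n) \<Rightarrow> (real^'n \<Rightarrow> real) \<Rightarrow> nat \<Rightarrow> (nat \<Rightarrow> real^'n \<Rightarrow> real) \<Rightarrow> real^'n \<Rightarrow> real^'n^'n" where
  "jacobian_stack f h r eta x = (\<chi> p q. frechet_derivative (stack f h r eta (row_idx p)) (at x) (axis q 1))"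

end

theory Submission imports Defs begin

text \<open>Every row of the Jacobian of (xi, eta) except the one of L_f^(r-1) h annihilates all input
  vectors g_i(x): the rows of xi by the relative-degree conditions, those of eta by hypothesis (2),
  which is needed at x only. So the Jacobian maps g_1(x) and g_2(x) into one line, and a nontrivial
  combination of these two independent vectors lies in its kernel. Smoothness of f and h only
  serves to make the rows of xi differentiable at x.\<close>

definition smooth_upto :: "nat \<Rightarrow> (real^'n \<Rightarrow> real) \<Rightarrow> bool" where
  "smooth_upto n F \<longleftrightarrow> (\<forall>ws. length ws \<le> n \<longrightarrow> (\<forall>y. foldr dirder ws F differentiable (at y)))"

lemma smooth_fun_iff_smooth_upto: "smooth_fun F \<longleftrightarrow> (\<forall>n. smooth_upto n F)"
  unfolding smooth_fun_def smooth_upto_def by blast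

lemma smooth_fun_differentiable:
  assumes "smooth_fun F"
  shows "F differentiable (at y)"
proof -
  have "foldr dirder [] F differentiable (at y)"
    using assms unfolding smooth_fun_def by blast
  then show ?thesis by simp
qed

lemma smooth_fun_dirder:
  assumes "smooth_fun F"
  shows "smooth_fun (dirder w F)"
  unfolding smooth_fun_def
proof (intro allI)
  fix ws y
  have "foldr dirder (ws @ [w]) F differentiable (at y)"
    using assms unfolding smooth_fun_def by blast
  then show "foldr dirder ws (dirder w F) differentiable (at y)" by simp
qed

lemma dirder_add:
  assumes "\<And>y. A differentiable (at y)" "\<And>y. B differentiable (at y)"
  shows "dirder w (\<lambda>y. A y + B y) = (\<lambda>y. dirder w A y + dirder w B y)"
proof
  fix y
  have "((\<lambda>y. A y + B y) has_derivative
      (\<lambda>v. frechet_derivative A (at y) v + frechet_derivative B (at y) v)) (at y)"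
    using assms by (intro has_derivative_add) (auto simp: frechet_derivative_works[symmetric])
  then show "dirder w (\<lambda>y. A y + B y) y = dirder w A y + dirder w B y"
    unfolding dirder_def by (simp flip: frechet_derivative_at)
qed

lemma dirder_mult:
  assumes "\<And>y. A differentiable (at y)" "\<And>y. B differentiable (at y)"
  shows "dirder w (\<lambda>y. A y * B y) = (\<lambda>y. dirder w A y * B y + A y * dirder w B y)"
proof
  fix y
  have "((\<lambda>y. A y * B y) has_derivative
      (\<lambda>v. A y * frechet_derivative B (at y) v + frechet_derivative A (at y) v * B y)) (at y)"
    using assms by (intro has_derivative_mult) (auto simp: frechet_derivative_works[symmetric])
  then show "dirder w (\<lambda>y. A y * B y) y = dirder w A y * B y + A y * dirder w B y"
    unfolding dirder_def by (simp flip: frechet_derivative_at)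
qed

lemma foldr_dirder_add:
  assumes "\<And>ws' y. length ws' < length ws \<Longrightarrow> foldr dirder ws' A differentiable (at y)"
    and "\<And>ws' y. length ws' < length ws \<Longrightarrow> foldr dirder ws' B differentiable (at y)"
  shows "foldr dirder ws (\<lambda>y. A y + B y) = (\<lambda>y. foldr dirder ws A y + foldr dirder ws B y)"
  using assms
proof (induction ws)
  case (Cons w ws)
  then have "foldr dirder ws (\<lambda>y. A y + B y) = (\<lambda>y. foldr dirder ws A y + foldr dirder ws B y)"
    by (intro Cons.IH) auto
  with Cons.prems show ?case by (simp add: dirder_add)
qed simp

lemma smooth_upto_add:
  fixes A B :: "real^'n \<Rightarrow> real"
  assumes "smooth_upto n A" "smooth_upto n B"
  shows "smooth_upto n (\<lambda>y. A y + B y)"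
  unfolding smooth_upto_def
proof (intro allI impI)
  fix ws :: "(real^'n) list" and y
  assume "length ws \<le> n"
  with assms show "foldr dirder ws (\<lambda>y. A y + B y) differentiable (at y)"
    unfolding smooth_upto_def by (subst foldr_dirder_add) auto
qed

lemma smooth_fun_add: "smooth_fun A \<Longrightarrow> smooth_fun B \<Longrightarrow> smooth_fun (\<lambda>y. A y + B y)"
  by (simp add: smooth_fun_iff_smooth_upto smooth_upto_add)

text \<open>The induction is on the order n, for all smooth factors at once: one derivative of a
  product is a sum of products of smooth functions.\<close>
lemma smooth_upto_mult:
  fixes A B :: "real^'n \<Rightarrow> real"
  shows "smooth_fun A \<Longrightarrow> smooth_fun B \<Longrightarrow> smooth_upto n (\<lambda>y. A y * B y)"
proof (induction n arbitrary: A B)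
  case 0
  then show ?case unfolding smooth_upto_def by (simp add: smooth_fun_differentiable)
next
  case (Suc n)
  show ?case unfolding smooth_upto_def
  proof (intro allI impI)
    fix ws :: "(real^'n) list" and y
    assume len: "length ws \<le> Suc n"
    show "foldr dirder ws (\<lambda>y. A y * B y) differentiable (at y)"
    proof (cases ws rule: rev_exhaust)
      case Nil
      with Suc.prems show ?thesis by (simp add: smooth_fun_differentiable)
    next
      case (snoc ws' w)
      with Suc.prems have "foldr dirder ws (\<lambda>y. A y * B y) =
          foldr dirder ws' (\<lambda>y. dirder w A y * B y + A y * dirder w B y)"
        by (simp add: dirder_mult smooth_fun_differentiable)
      moreover have "smooth_upto n (\<lambda>y. dirder w A y * B y + A y * dirder w B y)"
        using Suc.prems by (intro smooth_upto_add Suc.IH smooth_fun_dirder)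
      ultimately show ?thesis using len snoc unfolding smooth_upto_def by simp
    qed
  qed
qed

lemma smooth_fun_mult: "smooth_fun A \<Longrightarrow> smooth_fun B \<Longrightarrow> smooth_fun (\<lambda>y. A y * B y)"
  by (simp add: smooth_fun_iff_smooth_upto smooth_upto_mult)

lemma smooth_fun_zero: "smooth_fun (\<lambda>y::real^'n. 0::real)"
proof -
  have "foldr dirder ws (\<lambda>y. 0::real) = (\<lambda>y::real^'n. 0)" for ws :: "(real^'n) list"
    by (induction ws) (simp_all add: dirder_def)
  then show ?thesis unfolding smooth_fun_def by simp
qed

lemma smooth_fun_sum:
  "finite S \<Longrightarrow> (\<And>i. i \<in> S \<Longrightarrow> smooth_fun (F i)) \<Longrightarrow> smooth_fun (\<lambda>y. \<Sum>i\<in>S. F i y)"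
  by (induction S rule: finite_induct) (simp_all add: smooth_fun_zero smooth_fun_add)

lemma lie_eq_sum_dirder:
  assumes "\<And>y. A differentiable (at y)"
  shows "lie v A = (\<lambda>y. \<Sum>i\<in>UNIV. v y $ i * dirder (axis i 1) A y)"
proof
  fix y
  have "linear (frechet_derivative A (at y))"
    using assms[of y] by (simp add: frechet_derivative_works has_derivative_linear)
  then have "frechet_derivative A (at y) (\<Sum>i\<in>UNIV. v y $ i *\<^sub>R axis i 1)
      = (\<Sum>i\<in>UNIV. v y $ i * frechet_derivative A (at y) (axis i 1))"
    by (simp add: linear_sum linear_scale)
  moreover have "(\<Sum>i\<in>UNIV. v y $ i *\<^sub>R axis i 1) = v y"
    using basis_expansion[of "v y"] by (simp add: scalar_mult_eq_scaleR)
  ultimately have "frechet_derivative A (at y) (v y)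
      = (\<Sum>i\<in>UNIV. v y $ i * frechet_derivative A (at y) (axis i 1))"
    by simp
  then show "lie v A y = (\<Sum>i\<in>UNIV. v y $ i * dirder (axis i 1) A y)"
    unfolding lie_def dirder_def .
qed

lemma smooth_fun_lie:
  assumes "smooth_field v" "smooth_fun A"
  shows "smooth_fun (lie v A)"
proof -
  have "smooth_fun (\<lambda>y. \<Sum>i\<in>UNIV. v y $ i * dirder (axis i 1) A y)"
    using assms by (intro smooth_fun_sum smooth_fun_mult smooth_fun_dirder)
      (auto simp: smooth_field_def)
  then show ?thesis
    by (simp add: lie_eq_sum_dirder smooth_fun_differentiable assms(2))
qed

lemma smooth_fun_lie_iterate: "smooth_field v \<Longrightarrow> smooth_fun A \<Longrightarrow> smooth_fun ((lie v ^^ k) A)"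
  by (induction k) (simp_all add: smooth_fun_lie)

lemma row_idx_bij: "bij_betw (row_idx :: 'n::finite \<Rightarrow> nat) UNIV {..<CARD('n)}"
proof -
  have "\<exists>e. bij_betw e (UNIV :: 'n set) {..<CARD('n)}"
    using ex_bij_betw_finite_nat[of "UNIV :: 'n set"] by (simp add: atLeast0LessThan)
  then show ?thesis unfolding row_idx_def by (rule someI_ex)
qed

lemma stack_differentiable:
  assumes "smooth_field f" "smooth_fun h"
    and "\<forall>j < n - r. eta j differentiable (at x)" "k < n"
  shows "stack f h r eta k differentiable (at x)"
  using assms by (auto simp: stack_def smooth_fun_differentiable smooth_fun_lie_iterate)

lemma lie_input_stack_eq_0:
  assumes "rel_degree f g m h r x"
    and "\<forall>j < n - r. lie (g i) (eta j) x = 0"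
    and "i < m" "k < n" "k \<noteq> r - 1"
  shows "lie (g i) (stack f h r eta k) x = 0"
proof (cases "k < r")
  case True
  from assms(1) obtain U where "x \<in> U"
    and "\<forall>y\<in>U. \<forall>i<m. \<forall>k. k + 2 \<le> r \<longrightarrow> lie (g i) ((lie f ^^ k) h) y = 0"
    unfolding rel_degree_def by blast
  moreover have "k + 2 \<le> r"
    using True assms(5) by linarith
  ultimately show ?thesis
    using True assms(3) by (simp add: stack_def)
next
  case False
  with assms(2,4) show ?thesis
    by (simp add: stack_def)
qed

lemma jacobian_stack_mult_vec:
  fixes f :: "real^'n::finite \<Rightarrow> real^'n"
  assumes "\<And>k. k < CARD('n) \<Longrightarrow> stack f h r eta k differentiable (at x)"
  shows "jacobian_stack f h r eta x *v v
    = (\<chi> p. frechet_derivative (stack f h r eta (row_idx p)) (at x) v)"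
    (is "_ = ?D v")
proof -
  have row_linear: "linear (\<lambda>v. frechet_derivative (stack f h r eta (row_idx p)) (at x) v)"
    for p :: 'n
  proof -
    have "row_idx p < CARD('n)"
      using row_idx_bij by (auto simp: bij_betw_def)
    with assms show ?thesis
      by (metis frechet_derivative_works has_derivative_linear)
  qed
  have "linear ?D"
    by (intro linearI) (simp_all add: vec_eq_iff linear_add[OF row_linear] linear_scale[OF row_linear])
  moreover have "jacobian_stack f h r eta x = matrix ?D"
    by (simp add: jacobian_stack_def matrix_def)
  ultimately show ?thesis
    by (metis matrix_vector_mul(2))
qed

lemma jacobian_stack_mult_vec_eq_axis:
  fixes f :: "real^'n::finite \<Rightarrow> real^'n"
  assumes "\<And>k. k < CARD('n) \<Longrightarrow> stack f h r eta k differentiable (at x)"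
    and "\<And>k. k < CARD('n) \<Longrightarrow> k \<noteq> row_idx p0 \<Longrightarrow>
      frechet_derivative (stack f h r eta k) (at x) w = 0"
  shows "jacobian_stack f h r eta x *v w
    = frechet_derivative (stack f h r eta (row_idx p0)) (at x) w *\<^sub>R axis p0 1"
proof -
  have "(jacobian_stack f h r eta x *v w) $ p
      = (frechet_derivative (stack f h r eta (row_idx p0)) (at x) w *\<^sub>R axis p0 1) $ p"
    for p :: 'n
  proof (cases "p = p0")
    case True
    then show ?thesis
      by (simp add: jacobian_stack_mult_vec[OF assms(1)] axis_def)
  next
    case False
    then have "row_idx p \<noteq> row_idx p0" "row_idx p < CARD('n)"
      using row_idx_bij unfolding bij_betw_def inj_on_def by auto
    with False show ?thesis
      by (simp add: jacobian_stack_mult_vec[OF assms(1)] assms(2) axis_def)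
  qed
  then show ?thesis
    by (simp add: vec_eq_iff)
qed

lemma not_invertible_if_collinear_images:
  fixes A :: "real^'n^'n"
  assumes "A *v u = a *\<^sub>R e" "A *v w = b *\<^sub>R e"
    and indep: "\<And>c d. c *\<^sub>R u + d *\<^sub>R w = 0 \<Longrightarrow> c = 0 \<and> d = 0"
  shows "\<not> invertible A"
proof
  assume "invertible A"
  then have kernel: "A *v z = 0 \<Longrightarrow> z = 0" for z
    by (metis invertible_left_inverse matrix_left_invertible_ker)
  show False
  proof (cases "a = 0 \<and> b = 0")
    case True
    with assms(1) kernel have "u = 0"
      by simp
    then show False
      using indep[of 1 0] by simp
  next
    case False
    have "A *v (b *\<^sub>R u + (- a) *\<^sub>R w) = 0"
      using assms(1,2) by (simp add: algebra_simps)
    then have "b = 0 \<and> - a = 0"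
      using kernel indep by blast
    with False show False by simp
  qed
qed

lemma independent_pair_of_independent_family:
  fixes v :: "nat \<Rightarrow> 'a::real_vector"
  assumes indep: "\<forall>c. (\<Sum>k<m. c k *\<^sub>R v k) = 0 \<longrightarrow> (\<forall>k<m. c k = 0)"
    and "i < m" "j < m" "i \<noteq> j"
    and "a *\<^sub>R v i + b *\<^sub>R v j = 0"
  shows "a = 0 \<and> b = 0"
proof -
  define c where "c k = (if k = i then a else if k = j then b else 0)" for k
  have "(\<Sum>k<m. c k *\<^sub>R v k) = (\<Sum>k\<in>{i, j}. c k *\<^sub>R v k)"
    using assms(2-4) by (intro sum.mono_neutral_right) (auto simp: c_def)
  also have "\<dots> = a *\<^sub>R v i + b *\<^sub>R v j"
    using assms(4) by (simp add: c_def)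
  finally have "\<forall>k<m. c k = 0"
    using indep assms(5) by simp
  with assms(2-4) show ?thesis
    by (auto simp: c_def)
qed

lemma jacobian_stack_mult_input_field:
  fixes f :: "real^'n::finite \<Rightarrow> real^'n"
  assumes "smooth_field f" "smooth_fun h" "rel_degree f g m h r x"
    and "\<forall>j < CARD('n) - r. eta j differentiable (at x)"
    and "\<forall>j < CARD('n) - r. lie (g i) (eta j) x = 0"
    and "i < m" "row_idx p0 = r - 1"
  shows "jacobian_stack f h r eta x *v g i x
    = lie (g i) (stack f h r eta (r - 1)) x *\<^sub>R axis p0 1"
proof -
  have "lie (g i) (stack f h r eta k) x = 0" if "k < CARD('n)" "k \<noteq> row_idx p0" for k
    using lie_input_stack_eq_0[OF assms(3,5,6) that(1)] that(2) assms(7) by simp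
  then have "jacobian_stack f h r eta x *v g i x
      = frechet_derivative (stack f h r eta (row_idx p0)) (at x) (g i x) *\<^sub>R axis p0 1"
    by (intro jacobian_stack_mult_vec_eq_axis stack_differentiable[OF assms(1,2,4)])
      (simp_all add: lie_def)
  then show ?thesis
    by (simp add: assms(7) lie_def)
qed

lemma jacobian_stack_not_invertible:
  fixes f :: "real^'n::finite \<Rightarrow> real^'n"
  assumes "2 \<le> m" "smooth_field f" "smooth_fun h" "rel_degree f g m h r x" "r < CARD('n)"
    and "\<forall>c. (\<Sum>i<m. c i *\<^sub>R g i x) = 0 \<longrightarrow> (\<forall>i<m. c i = 0)"
    and "\<forall>j < CARD('n) - r. eta j differentiable (at x)"
    and "\<forall>i<m. \<forall>j < CARD('n) - r. lie (g i) (eta j) x = 0"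
  shows "\<not> invertible (jacobian_stack f h r eta x)"
proof -
  have "r - 1 \<in> range (row_idx :: 'n \<Rightarrow> nat)"
    using row_idx_bij[where 'n='n] assms(5) by (simp add: bij_betw_def)
  then obtain p0 :: 'n where p0: "row_idx p0 = r - 1"
    by (metis rangeE)
  have "0 < m" "1 < m"
    using assms(1) by auto
  then have image: "jacobian_stack f h r eta x *v g i x
      = lie (g i) (stack f h r eta (r - 1)) x *\<^sub>R axis p0 1" if "i \<in> {0, 1}" for i
    using that assms(8) by (intro jacobian_stack_mult_input_field[OF assms(2-4,7) _ _ p0]) auto
  have independent: "c = 0 \<and> d = 0" if "c *\<^sub>R g 0 x + d *\<^sub>R g 1 x = 0" for c d
    using independent_pair_of_independent_family[OF assms(6) _ _ _ that] assms(1) by simp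
  show ?thesis
    using not_invertible_if_collinear_images[OF image[of 0] image[of 1] independent] by simp
qed

theorem theorem7:
  fixes f :: "real^'n \<Rightarrow> real^'n" and g :: "nat \<Rightarrow> real^'n \<Rightarrow> real^'n"
    and h :: "real^'n \<Rightarrow> real" and m r :: nat and x :: "real^'n"
  assumes "m \<ge> 2"
    and "smooth_field f" and "\<forall>i<m. smooth_field (g i)" and "smooth_fun h"
    and "rel_degree f g m h r x" and "r < CARD('n)"
    and "\<forall>c. (\<Sum>i<m. c i *\<^sub>R g i x) = 0 \<longrightarrow> (\<forall>i<m. c i = 0)"
  shows "\<not> (\<exists>eta :: nat \<Rightarrow> real^'n \<Rightarrow> real.
              (\<forall>j < CARD('n) - r. eta j differentiable (at x)) \<and>
              invertible (jacobian_stack f h r eta x) \<and>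
              (\<exists>U. open U \<and> x \<in> U \<and>
                 (\<forall>y\<in>U. \<forall>i<m. \<forall>j < CARD('n) - r. lie (g i) (eta j) y = 0)))"
  using jacobian_stack_not_invertible[OF assms(1,2,4-7)] by blast

end
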